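(* Let $\mathtt{p}$ be a CF program that terminates on every input and that does not have call overlap. Then $\mathtt{p}$ is in CFpoly, i.e., there is a polynomial $\pi$ with $\mathit{time}_{\mathtt{p}}(x)\le\pi(|x|)$ for all $x\in\{0,1\}^*$.
   Context: CF ("cons-free") is a first-order, call-by-value functional language over booleans and bit lists $\{0,1\}^*$. A program is a finite sequence of mutually recursive function definitions $\mathtt{f\ x1 \dots xm = e}$ ($m\ge0$), the first being a one-argument entry function. Expressions are $\mathtt{True}$, $\mathtt{False}$, $\mathtt{[]}$, variables, base calls $\mathtt{not\ e}$, $\mathtt{null\ e}$, $\mathtt{head\ e}$, $\mathtt{tail\ e}$, conditionals $\mathtt{if\ e_0\ then\ e_1\ else\ e_2}$, and calls $\mathtt{f\ e_1\dots e_m}$ of defined functions; there are no list constructors. Semantics is standard big-step call-by-value evaluation given by inference rules deriving $\mathtt{p},\rho\vdash\mathtt{e}\to v$; the derivation tree for the run on input $x$ is the computation tree $\mathcal{T}^{\mathtt{p},x}$, and the native running time $\mathit{time}_{\mathtt{p}}(x)$ is the number of nodes of $\mathcal{T}^{\mathtt{p},x}$. A CF program has call overlap if, on some input, it calls the same defined function more than once with the same tuple of argument values. CFpoly is the class of CF programs that terminate in polynomial (native) time. *)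

theory Defs
  imports "HOL-Computational_Algebra.Polynomial"
begin

text \<open>Values: booleans and bit lists (bit 0 = False, bit 1 = True).\<close>
datatype val = VBool bool | VList "bool list"

text \<open>Expressions. Variables are referenced by their position (de Bruijn-style index)
  among the parameters of the enclosing function; defined functions are referenced by
  their position in the program.\<close>
datatype expr =
    ETrue | EFalse | ENil
  | EVar nat
  | ENot expr | ENull expr | EHead expr | ETail expr
  | EIf expr expr expr
  | ECall nat "expr list"

text \<open>A program is a list of definitions (arity m, body); the first is the entry.\<close>
type_synonym program = "(nat \<times> expr) list"

fun wf_expr :: "program \<Rightarrow> nat \<Rightarrow> expr \<Rightarrow> bool" where
  "wf_expr p m ETrue = True"
| "wf_expr p m EFalse = True"
| "wf_expr p m ENil = True"
| "wf_expr p m (EVar i) = (i < m)"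
| "wf_expr p m (ENot e) = wf_expr p m e"
| "wf_expr p m (ENull e) = wf_expr p m e"
| "wf_expr p m (EHead e) = wf_expr p m e"
| "wf_expr p m (ETail e) = wf_expr p m e"
| "wf_expr p m (EIf e0 e1 e2) = (wf_expr p m e0 \<and> wf_expr p m e1 \<and> wf_expr p m e2)"
| "wf_expr p m (ECall f es) =
     (f < length p \<and> length es = fst (p ! f) \<and> (\<forall>e \<in> set es. wf_expr p m e))"

definition wf_program :: "program \<Rightarrow> bool" where
  "wf_program p \<longleftrightarrow> p \<noteq> [] \<and> fst (p ! 0) = 1 \<and>
     (\<forall>d \<in> set p. wf_expr p (fst d) (snd d))"

text \<open>A derivation tree node is labelled with Some (f, args) if it is an
  instance of the rule for a call of the defined function f with argument values args,
  and with None otherwise.\<close>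
datatype dtree = Node "(nat \<times> val list) option" "dtree list"

fun nodes :: "dtree \<Rightarrow> nat" where
  "nodes (Node l ts) = Suc (sum_list (map nodes ts))"

fun calls :: "dtree \<Rightarrow> (nat \<times> val list) list" where
  "calls (Node l ts) = (case l of Some c \<Rightarrow> [c] | None \<Rightarrow> []) @ concat (map calls ts)"

inductive eval :: "program \<Rightarrow> val list \<Rightarrow> expr \<Rightarrow> val \<Rightarrow> dtree \<Rightarrow> bool" where
  ev_true: "eval p rho ETrue (VBool True) (Node None [])"
| ev_false: "eval p rho EFalse (VBool False) (Node None [])"
| ev_nil: "eval p rho ENil (VList []) (Node None [])"
| ev_var: "i < length rho \<Longrightarrow> eval p rho (EVar i) (rho ! i) (Node None [])"
| ev_not: "eval p rho e (VBool b) t \<Longrightarrow> eval p rho (ENot e) (VBool (\<not> b)) (Node None [t])"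
| ev_null: "eval p rho e (VList xs) t \<Longrightarrow> eval p rho (ENull e) (VBool (xs = [])) (Node None [t])"
| ev_head: "eval p rho e (VList (b # xs)) t \<Longrightarrow> eval p rho (EHead e) (VBool b) (Node None [t])"
| ev_tail: "eval p rho e (VList (b # xs)) t \<Longrightarrow> eval p rho (ETail e) (VList xs) (Node None [t])"
| ev_if_true: "eval p rho e0 (VBool True) t0 \<Longrightarrow> eval p rho e1 v t1 \<Longrightarrow>
     eval p rho (EIf e0 e1 e2) v (Node None [t0, t1])"
| ev_if_false: "eval p rho e0 (VBool False) t0 \<Longrightarrow> eval p rho e2 v t2 \<Longrightarrow>
     eval p rho (EIf e0 e1 e2) v (Node None [t0, t2])"
| ev_call: "list_all2 (\<lambda>e vt. eval p rho e (fst vt) (snd vt)) es vts \<Longrightarrow>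
     f < length p \<Longrightarrow> length vts = fst (p ! f) \<Longrightarrow>
     eval p (map fst vts) (snd (p ! f)) v tb \<Longrightarrow>
     eval p rho (ECall f es) v (Node (Some (f, map fst vts)) (map snd vts @ [tb]))"

definition run :: "program \<Rightarrow> bool list \<Rightarrow> val \<Rightarrow> dtree \<Rightarrow> bool" where
  "run p x v t \<longleftrightarrow> eval p [VList x] (ECall 0 [EVar 0]) v t"

definition terminates_everywhere :: "program \<Rightarrow> bool" where
  "terminates_everywhere p \<longleftrightarrow> (\<forall>x. \<exists>v t. run p x v t)"

definition has_call_overlap :: "program \<Rightarrow> bool" where
  "has_call_overlap p \<longleftrightarrow> (\<exists>x v t. run p x v t \<and> \<not> distinct (calls t))"

text \<open>CFpoly: p terminates in polynomial native time (number of nodes of the computation tree).\<close>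
definition in_CFpoly :: "program \<Rightarrow> bool" where
  "in_CFpoly p \<longleftrightarrow> (\<exists>q :: nat poly. \<forall>x v t. run p x v t \<longrightarrow> nodes t \<le> poly q (length x))"

end

theory Submission
  imports Defs "HOL-Library.Sublist"
begin

text \<open>Every node of a computation tree is either a call node or lies in the body of the
  innermost enclosing call (or in the top expression), so the running time is linear in the
  number of call nodes. Since CF has no list constructors, every value arising in a run on
  input \<open>x\<close> is a boolean or a suffix of \<open>x\<close>; hence a call label is one of at most
  \<open>length p * (\<Sum>i\<le>a. (|x| + 3) ^ i)\<close> tuples, where \<open>a\<close> bounds the arities. Without call
  overlap the call labels of a run are pairwise distinct, which bounds their number and thus
  the running time by a polynomial in \<open>|x|\<close>.\<close>

text \<open>Unlike the generated \<open>size\<close>, this counts every syntax node, leaves included.\<close>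

fun expr_size :: "expr \<Rightarrow> nat" where
  "expr_size (ENot e) = Suc (expr_size e)"
| "expr_size (ENull e) = Suc (expr_size e)"
| "expr_size (EHead e) = Suc (expr_size e)"
| "expr_size (ETail e) = Suc (expr_size e)"
| "expr_size (EIf e0 e1 e2) = Suc (expr_size e0 + expr_size e1 + expr_size e2)"
| "expr_size (ECall f es) = Suc (\<Sum>e\<leftarrow>es. expr_size e)"
| "expr_size _ = 1"

definition max_body_size :: "program \<Rightarrow> nat" where
  "max_body_size p = Max ((expr_size \<circ> snd) ` set p)"

definition max_arity :: "program \<Rightarrow> nat" where
  "max_arity p = Max (fst ` set p)"

lemma expr_size_body_le_max_body_size:
  "f < length p \<Longrightarrow> expr_size (snd (p ! f)) \<le> max_body_size p"
  unfolding max_body_size_def by simp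

lemma arity_le_max_arity: "f < length p \<Longrightarrow> fst (p ! f) \<le> max_arity p"
  unfolding max_arity_def by simp

lemma sum_list_le_sum_list_list_all2:
  fixes g h :: "'b \<Rightarrow> nat" and f :: "'a \<Rightarrow> nat"
  assumes "list_all2 (\<lambda>x y. g y \<le> f x + k * h y) xs ys"
  shows "(\<Sum>y\<leftarrow>ys. g y) \<le> (\<Sum>x\<leftarrow>xs. f x) + k * (\<Sum>y\<leftarrow>ys. h y)"
  using assms by (induction rule: list_all2_induct) (auto simp: algebra_simps)

lemma eval_nodes_le:
  "eval p rho e v t \<Longrightarrow> nodes t \<le> expr_size e + max_body_size p * length (calls t)"
proof (induction rule: eval.induct)
  case (ev_call p rho es vts f v tb)
  let ?K = "max_body_size p"
  have "list_all2 (\<lambda>e vt. nodes (snd vt) \<le> expr_size e + ?K * length (calls (snd vt))) es vts"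
    using ev_call.IH(1) by (rule list_all2_mono) auto
  then have args: "(\<Sum>vt\<leftarrow>vts. nodes (snd vt))
      \<le> (\<Sum>e\<leftarrow>es. expr_size e) + ?K * (\<Sum>vt\<leftarrow>vts. length (calls (snd vt)))"
    by (rule sum_list_le_sum_list_list_all2)
  have "expr_size (snd (p ! f)) \<le> ?K"
    using \<open>f < length p\<close> by (rule expr_size_body_le_max_body_size)
  with args ev_call.IH(2) show ?case
    by (simp add: length_concat comp_def algebra_simps)
qed (auto simp: algebra_simps)

definition values_of :: "bool list \<Rightarrow> val set" where
  "values_of x = range VBool \<union> VList ` {ys. suffix ys x}"

lemma finite_values_of: "finite (values_of x)"
proof -
  have "range VBool = {VBool True, VBool False}" by auto
  then show ?thesis
    unfolding values_of_def by (simp flip: set_suffixes_eq)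
qed

lemma card_values_of_le: "card (values_of x) \<le> length x + 3"
proof -
  have "card (range VBool) \<le> 2"
    using card_image_le[of UNIV VBool] by simp
  moreover have "card (VList ` {ys. suffix ys x}) \<le> length x + 1"
    using card_image_le[of "{ys. suffix ys x}" VList] by (simp flip: set_suffixes_eq)
  moreover have "card (values_of x) \<le> card (range VBool) + card (VList ` {ys. suffix ys x})"
    unfolding values_of_def by (rule card_Un_le)
  ultimately show ?thesis
    by linarith
qed

lemma VBool_in_values_of [simp]: "VBool b \<in> values_of x"
  unfolding values_of_def by simp

lemma VList_in_values_of_iff [simp]: "VList ys \<in> values_of x \<longleftrightarrow> suffix ys x"
  unfolding values_of_def by auto

definition call_labels :: "program \<Rightarrow> bool list \<Rightarrow> (nat \<times> val list) set" where
  "call_labels p x = {0..<length p} \<times> {vs. set vs \<subseteq> values_of x \<and> length vs \<le> max_arity p}"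

lemma finite_call_labels: "finite (call_labels p x)"
  unfolding call_labels_def using finite_lists_length_le[OF finite_values_of] by simp

lemma card_call_labels_le:
  "card (call_labels p x) \<le> length p * (\<Sum>i\<le>max_arity p. (length x + 3) ^ i)"
proof -
  have "(\<Sum>i\<le>max_arity p. card (values_of x) ^ i) \<le> (\<Sum>i\<le>max_arity p. (length x + 3) ^ i)"
    by (intro sum_mono power_mono card_values_of_le) simp
  then show ?thesis
    unfolding call_labels_def
    by (simp add: card_cartesian_product card_lists_length_le[OF finite_values_of])
qed

lemma eval_in_values_of:
  "eval p rho e v t \<Longrightarrow> set rho \<subseteq> values_of x \<Longrightarrow>
     v \<in> values_of x \<and> set (calls t) \<subseteq> call_labels p x"
proof (induction rule: eval.induct)
  case (ev_call p rho es vts f v tb)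
  have "list_all2 (\<lambda>e vt. fst vt \<in> values_of x \<and> set (calls (snd vt)) \<subseteq> call_labels p x) es vts"
    using ev_call.IH(1) by (rule list_all2_mono) (use ev_call.prems in auto)
  then have args: "fst vt \<in> values_of x" "set (calls (snd vt)) \<subseteq> call_labels p x"
    if "vt \<in> set vts" for vt
    using that by (auto simp: in_set_conv_nth dest: list_all2_nthD2)
  then have "set (map fst vts) \<subseteq> values_of x"
    by auto
  moreover have "(f, map fst vts) \<in> call_labels p x"
    using calculation \<open>f < length p\<close> \<open>length vts = fst (p ! f)\<close> arity_le_max_arity
    by (simp add: call_labels_def)
  ultimately show ?case
    using ev_call.IH(2) args(2) by auto
qed (auto dest: suffix_ConsD)

lemma run_nodes_le:
  assumes "run p x v t" and "distinct (calls t)"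
  shows "nodes t \<le> 2 + max_body_size p * length p * (\<Sum>i\<le>max_arity p. (length x + 3) ^ i)"
proof -
  have ev: "eval p [VList x] (ECall 0 [EVar 0]) v t"
    using assms(1) unfolding run_def .
  have "set (calls t) \<subseteq> call_labels p x"
    using eval_in_values_of[OF ev] by simp
  then have "length (calls t) \<le> card (call_labels p x)"
    using card_mono[OF finite_call_labels] distinct_card[OF assms(2)] by metis
  also have "\<dots> \<le> length p * (\<Sum>i\<le>max_arity p. (length x + 3) ^ i)"
    by (rule card_call_labels_le)
  finally have "length (calls t) \<le> length p * (\<Sum>i\<le>max_arity p. (length x + 3) ^ i)" .
  then have "max_body_size p * length (calls t)
      \<le> max_body_size p * length p * (\<Sum>i\<le>max_arity p. (length x + 3) ^ i)"
    unfolding mult.assoc by (rule mult_le_mono2)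
  moreover have "nodes t \<le> 2 + max_body_size p * length (calls t)"
    using eval_nodes_le[OF ev] by simp
  ultimately show ?thesis
    by linarith
qed

theorem lemma6:
  assumes "wf_program p"
    and "terminates_everywhere p"
    and "\<not> has_call_overlap p"
  shows "in_CFpoly p"
proof -
  define q :: "nat poly" where
    "q = [:2:] + smult (max_body_size p * length p) (\<Sum>i\<le>max_arity p. [:3, 1:] ^ i)"
  have poly_q: "poly q n = 2 + max_body_size p * length p * (\<Sum>i\<le>max_arity p. (n + 3) ^ i)" for n
    unfolding q_def by (simp add: poly_sum algebra_simps)
  have "nodes t \<le> poly q (length x)" if "run p x v t" for x v t
  proof -
    have "distinct (calls t)"
      using assms(3) that unfolding has_call_overlap_def by blast
    with that show ?thesis
      unfolding poly_q by (rule run_nodes_le)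
  qed
  then show ?thesis
    unfolding in_CFpoly_def by blast
qed

end
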